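(* Let $\phi:G\to G$ be any endomorphism of any group $G$, and let $H$ be a subgroup of $G$ such that $\phi(H)\subset H$ and for every $x\in G$ there is $n\in\mathbb N$ with $\phi^n(x)\in H$. Let $\phi_H:H\to H$ be the restriction of $\phi$. Then $R(\phi)=R(\phi_H)$. If all the numbers $R(\phi^n)$ are finite, then $R_\phi(z)=R_{\phi_H}(z)$.
   Context: For an endomorphism $\phi$ of a group $G$, two elements $\alpha,\beta\in G$ are $\phi$-conjugate if $\beta=g\alpha\phi(g)^{-1}$ for some $g\in G$; the Reidemeister number $R(\phi)$ is the number of $\phi$-conjugacy classes, and the Reidemeister zeta function is $R_\phi(z)=\exp\left(\sum_{n\ge1}\frac{R(\phi^n)}{n}z^n\right)$. *)

theory Defs
  imports "HOL-Algebra.Group" "HOL-Computational_Algebra.Formal_Power_Series" "HOL-Library.Extended_Nat"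
begin

definition twisted_conj_rel :: "('a, 'b) monoid_scheme \<Rightarrow> ('a \<Rightarrow> 'a) \<Rightarrow> ('a \<times> 'a) set" where
  "twisted_conj_rel G phi =
     {(a, b). a \<in> carrier G \<and> b \<in> carrier G \<and>
        (\<exists>g \<in> carrier G. b = g \<otimes>\<^bsub>G\<^esub> a \<otimes>\<^bsub>G\<^esub> inv\<^bsub>G\<^esub> (phi g))}"

definition reidemeister_classes :: "('a, 'b) monoid_scheme \<Rightarrow> ('a \<Rightarrow> 'a) \<Rightarrow> 'a set set" where
  "reidemeister_classes G phi = carrier G // twisted_conj_rel G phi"

definition reidemeister_number :: "('a, 'b) monoid_scheme \<Rightarrow> ('a \<Rightarrow> 'a) \<Rightarrow> enat" where
  "reidemeister_number G phi =
     (if finite (reidemeister_classes G phi) then enat (card (reidemeister_classes G phi)) else \<infinity>)"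

text \<open>Reidemeister zeta function exp(sum_{n>=1} R(phi^n)/n z^n) as a formal power series
  (meaningful when all R(phi^n) are finite).\<close>
definition reidemeister_zeta :: "('a, 'b) monoid_scheme \<Rightarrow> ('a \<Rightarrow> 'a) \<Rightarrow> complex fps" where
  "reidemeister_zeta G phi =
     fps_exp 1 oo Abs_fps (\<lambda>n. if n = 0 then 0
        else of_nat (the_enat (reidemeister_number G (phi ^^ n))) / of_nat n)"

end

theory Submission
  imports Defs
begin

text \<open>
  Taking \<open>g = a\<inverse>\<close> shows \<open>a \<sim> \<phi>(a)\<close>, so every \<open>\<phi>\<close>-conjugacy class of \<open>G\<close> contains an
  element of \<open>H\<close>. If \<open>a, b \<in> H\<close> satisfy \<open>b = g a \<phi>(g)\<inverse>\<close> with \<open>g \<in> G\<close>, choose \<open>n\<close> with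
  \<open>\<phi>\<^sup>n(g) \<in> H\<close>; then \<open>\<phi>\<^sup>n(b) = \<phi>\<^sup>n(g) \<phi>\<^sup>n(a) \<phi>(\<phi>\<^sup>n(g))\<inverse>\<close>, so inside \<open>H\<close> we get
  \<open>a \<sim> \<phi>\<^sup>n(a) \<sim> \<phi>\<^sup>n(b) \<sim> b\<close>. Hence the \<open>\<phi>\<^sub>H\<close>-classes are exactly the traces on \<open>H\<close> of the
  \<open>\<phi>\<close>-classes, and \<open>R(\<phi>) = R(\<phi>\<^sub>H)\<close>. The hypotheses are inherited by every \<open>\<phi>\<^sup>n\<close> with
  \<open>n \<ge> 1\<close>, so all coefficients of the two zeta functions agree.
\<close>

lemma equiv_restrict:
  assumes "equiv A r" "B \<subseteq> A"
  shows "equiv B (Restr r B)"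
proof -
  from assms(1) obtain "refl_on A r" "sym r" "trans r" by (rule equivE)
  with assms(2) show ?thesis
    unfolding equiv_def refl_on_def sym_def trans_def by blast
qed

lemma bij_betw_quotient_restrict:
  assumes r: "equiv A r" and BA: "B \<subseteq> A" and meets: "\<forall>x\<in>A. \<exists>y\<in>B. (x, y) \<in> r"
  shows "bij_betw (\<lambda>X. r `` X) (B // Restr r B) (A // r)"
proof -
  let ?s = "Restr r B"
  have s: "equiv B ?s" by (rule equiv_restrict[OF r BA])
  from r obtain "refl_on A r" "trans r" by (rule equivE)
  have class_image: "r `` (?s `` {x}) = r `` {x}" if "x \<in> B" for x
  proof
    show "r `` (?s `` {x}) \<subseteq> r `` {x}"
      using \<open>trans r\<close> unfolding trans_def by blast
    show "r `` {x} \<subseteq> r `` (?s `` {x})"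
      using \<open>refl_on A r\<close> BA that unfolding refl_on_def by blast
  qed
  show ?thesis
  proof (rule bij_betw_imageI)
    show "inj_on (\<lambda>X. r `` X) (B // ?s)"
    proof (rule inj_onI)
      fix X Y assume "X \<in> B // ?s" "Y \<in> B // ?s" and eq: "r `` X = r `` Y"
      then obtain x y where xy: "x \<in> B" "y \<in> B" "X = ?s `` {x}" "Y = ?s `` {y}"
        by (auto elim!: quotientE)
      with eq have "r `` {x} = r `` {y}" by (simp add: class_image)
      with xy BA have "(x, y) \<in> ?s" using eq_equiv_class_iff[OF r] by blast
      with xy show "X = Y" using equiv_class_eq[OF s] by simp
    qed
    show "(\<lambda>X. r `` X) ` (B // ?s) = A // r"
    proof (intro equalityI subsetI)
      fix C assume "C \<in> (\<lambda>X. r `` X) ` (B // ?s)"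
      then obtain x where "x \<in> B" "C = r `` (?s `` {x})" by (auto elim!: quotientE)
      with BA show "C \<in> A // r" by (auto simp: class_image intro: quotientI)
    next
      fix C assume "C \<in> A // r"
      then obtain x where x: "x \<in> A" "C = r `` {x}" by (auto elim!: quotientE)
      with meets obtain y where y: "y \<in> B" "(x, y) \<in> r" by blast
      with x have "C = r `` (?s `` {y})" by (simp add: class_image equiv_class_eq[OF r])
      with y show "C \<in> (\<lambda>X. r `` X) ` (B // ?s)" by (auto intro: quotientI)
    qed
  qed
qed

lemma funpow_hom: "f \<in> hom G G \<Longrightarrow> f ^^ n \<in> hom G G"
  by (induction n) (auto simp: hom_def Pi_def)

lemma group_hom_funpow:
  assumes "group_hom G G f"
  shows "group_hom G G (f ^^ n)"
  using assms by (simp add: group_hom_def group_hom_axioms_def funpow_hom)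

lemma funpow_image_subset: "f ` H \<subseteq> H \<Longrightarrow> (f ^^ n) ` H \<subseteq> H"
  by (induction n) auto

lemma funpow_eventually_in_funpow:
  assumes "f ` H \<subseteq> H" and "(f ^^ k) x \<in> H" and "n \<ge> 1"
  shows "((f ^^ n) ^^ k) x \<in> H"
proof -
  have "k \<le> n * k" using \<open>n \<ge> 1\<close> by simp
  then have "(f ^^ n) ^^ k = f ^^ (n * k - k) \<circ> f ^^ k"
    by (simp add: funpow_mult funpow_add[symmetric] mult.commute)
  then show ?thesis using funpow_image_subset[OF assms(1), of "n * k - k"] assms(2) by auto
qed

context
  fixes G :: "('a, 'b) monoid_scheme" (structure) and phi :: "'a \<Rightarrow> 'a"
  assumes group_hom: "group_hom G G phi"
begin

interpretation group_hom G G phi by (fact group_hom)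

lemma twisted_conj_rel_equiv: "equiv (carrier G) (twisted_conj_rel G phi)"
proof (rule equivI)
  show "refl_on (carrier G) (twisted_conj_rel G phi)"
    unfolding refl_on_def twisted_conj_rel_def by (auto intro!: bexI[of _ \<one>])
  show "sym (twisted_conj_rel G phi)"
  proof (rule symI)
    fix a b assume "(a, b) \<in> twisted_conj_rel G phi"
    then obtain g where g: "a \<in> carrier G" "b \<in> carrier G" "g \<in> carrier G"
      "b = g \<otimes> a \<otimes> inv (phi g)" by (auto simp: twisted_conj_rel_def)
    have "inv g \<otimes> b \<otimes> inv (phi (inv g)) = inv g \<otimes> (g \<otimes> a)"
      using g by (simp add: m_assoc)
    also have "\<dots> = a"
      using g by (simp add: m_assoc[symmetric])
    finally show "(b, a) \<in> twisted_conj_rel G phi"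
      using g by (auto simp: twisted_conj_rel_def intro!: bexI[of _ "inv g"])
  qed
  show "trans (twisted_conj_rel G phi)"
  proof (rule transI)
    fix a b c assume "(a, b) \<in> twisted_conj_rel G phi" "(b, c) \<in> twisted_conj_rel G phi"
    then obtain g k where g: "a \<in> carrier G" "b \<in> carrier G" "c \<in> carrier G" "g \<in> carrier G" "k \<in> carrier G"
      "b = g \<otimes> a \<otimes> inv (phi g)" "c = k \<otimes> b \<otimes> inv (phi k)"
      by (auto simp: twisted_conj_rel_def)
    have "(k \<otimes> g) \<otimes> a \<otimes> inv (phi (k \<otimes> g)) = k \<otimes> (g \<otimes> a \<otimes> inv (phi g)) \<otimes> inv (phi k)"
      using g by (simp add: m_assoc inv_mult_group)
    then have "c = (k \<otimes> g) \<otimes> a \<otimes> inv (phi (k \<otimes> g))"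
      using g by simp
    with g show "(a, c) \<in> twisted_conj_rel G phi"
      by (auto simp: twisted_conj_rel_def intro!: bexI[of _ "k \<otimes> g"])
  qed
  show "twisted_conj_rel G phi \<subseteq> carrier G \<times> carrier G"
    by (auto simp: twisted_conj_rel_def)
qed

lemma twisted_conj_rel_apply:
  assumes "a \<in> carrier G"
  shows "(a, phi a) \<in> twisted_conj_rel G phi"
proof -
  have "phi a = inv a \<otimes> a \<otimes> inv (phi (inv a))" using assms by simp
  then show ?thesis using assms by (auto simp: twisted_conj_rel_def intro!: bexI[of _ "inv a"])
qed

lemma twisted_conj_rel_funpow:
  assumes "a \<in> carrier G"
  shows "(a, (phi ^^ n) a) \<in> twisted_conj_rel G phi"
proof (induction n)
  case 0
  show ?case using twisted_conj_rel_equiv assms by (simp add: equiv_def refl_on_def)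
next
  case (Suc n)
  have "(phi ^^ n) a \<in> carrier G" using Suc.IH by (simp add: twisted_conj_rel_def)
  then have step: "((phi ^^ n) a, (phi ^^ Suc n) a) \<in> twisted_conj_rel G phi"
    by (simp add: twisted_conj_rel_apply)
  have "trans (twisted_conj_rel G phi)"
    using twisted_conj_rel_equiv by (simp add: equiv_def)
  then show ?case using Suc.IH step by (rule transD)
qed

lemma twisted_conj_commuting_hom:
  assumes psi: "group_hom G G psi" and comm: "\<And>x. psi (phi x) = phi (psi x)"
    and carrier: "a \<in> carrier G" "g \<in> carrier G"
  shows "psi (g \<otimes> a \<otimes> inv (phi g)) = psi g \<otimes> psi a \<otimes> inv (phi (psi g))"
  using group_hom.hom_mult[OF psi] group_hom.hom_inv[OF psi] carrier comm by simp

end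

lemma twisted_conj_rel_subgroup:
  assumes "group G" "subgroup H G" "phi ` H \<subseteq> H"
  shows "twisted_conj_rel (G\<lparr>carrier := H\<rparr>) phi =
    {(a, b). a \<in> H \<and> b \<in> H \<and> (\<exists>g \<in> H. b = g \<otimes>\<^bsub>G\<^esub> a \<otimes>\<^bsub>G\<^esub> inv\<^bsub>G\<^esub> (phi g))}"
proof -
  have "inv\<^bsub>G\<lparr>carrier := H\<rparr>\<^esub> (phi g) = inv\<^bsub>G\<^esub> (phi g)" if "g \<in> H" for g
    using group.m_inv_consistent[OF assms(1,2)] assms(3) that by blast
  then show ?thesis unfolding twisted_conj_rel_def by auto
qed

lemma group_hom_restrict_subgroup:
  assumes "group_hom G G phi" "subgroup H G" "phi ` H \<subseteq> H"
  shows "group_hom (G\<lparr>carrier := H\<rparr>) (G\<lparr>carrier := H\<rparr>) phi"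
proof -
  have "phi \<in> hom G G" "H \<subseteq> carrier G"
    using assms(1,2) group_hom.homh subgroup.subset by blast+
  then have "phi \<in> hom (G\<lparr>carrier := H\<rparr>) (G\<lparr>carrier := H\<rparr>)"
    using assms(3) by (auto simp: hom_def Pi_def subset_iff)
  then show ?thesis
    using group_hom.axioms(1)[OF assms(1)] subgroup.subgroup_is_group[OF assms(2)]
    by (simp add: group_hom_def group_hom_axioms_def)
qed

context
  fixes G :: "('a, 'b) monoid_scheme" (structure) and phi :: "'a \<Rightarrow> 'a" and H :: "'a set"
  assumes group_hom: "group_hom G G phi"
    and subgroup: "subgroup H G"
    and invariant: "phi ` H \<subseteq> H"
    and eventually_in: "\<forall>x \<in> carrier G. \<exists>n. (phi ^^ n) x \<in> H"
begin

interpretation group_hom G G phi by (fact group_hom)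

lemma twisted_conj_rel_subgroupI:
  assumes "a \<in> H" "b \<in> H" "(a, b) \<in> twisted_conj_rel G phi"
  shows "(a, b) \<in> twisted_conj_rel (G\<lparr>carrier := H\<rparr>) phi"
proof -
  let ?K = "G\<lparr>carrier := H\<rparr>"
  have H_sub: "H \<subseteq> carrier G" by (rule subgroup.subset[OF subgroup])
  have rel_K: "twisted_conj_rel ?K phi =
      {(a, b). a \<in> H \<and> b \<in> H \<and> (\<exists>g \<in> H. b = g \<otimes> a \<otimes> inv (phi g))}"
    by (rule twisted_conj_rel_subgroup[OF is_group subgroup invariant])
  have hom_K: "group_hom ?K ?K phi"
    by (rule group_hom_restrict_subgroup[OF group_hom subgroup invariant])
  obtain g where g: "g \<in> carrier G" and b: "b = g \<otimes> a \<otimes> inv (phi g)"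
    using assms(3) by (auto simp: twisted_conj_rel_def)
  obtain n where n: "(phi ^^ n) g \<in> H" using eventually_in g by blast
  have "(phi ^^ n) b = (phi ^^ n) g \<otimes> (phi ^^ n) a \<otimes> inv (phi ((phi ^^ n) g))"
    unfolding b using assms(1) H_sub g
    by (intro twisted_conj_commuting_hom[OF group_hom group_hom_funpow[OF group_hom]])
      (auto simp: funpow_swap1)
  then have "((phi ^^ n) a, (phi ^^ n) b) \<in> twisted_conj_rel ?K phi"
    unfolding rel_K using n assms(1,2) funpow_image_subset[OF invariant] by blast
  moreover have "(a, (phi ^^ n) a) \<in> twisted_conj_rel ?K phi"
    "(b, (phi ^^ n) b) \<in> twisted_conj_rel ?K phi"
    using twisted_conj_rel_funpow[OF hom_K] assms(1,2) by auto
  ultimately show ?thesis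
    using twisted_conj_rel_equiv[OF hom_K] by (meson equiv_def symE transE)
qed

lemma twisted_conj_rel_subgroup_eq_restrict:
  "twisted_conj_rel (G\<lparr>carrier := H\<rparr>) phi = Restr (twisted_conj_rel G phi) H"
proof (intro equalityI subsetI)
  fix p assume "p \<in> twisted_conj_rel (G\<lparr>carrier := H\<rparr>) phi"
  then show "p \<in> Restr (twisted_conj_rel G phi) H"
    using subgroup.subset[OF subgroup]
    unfolding twisted_conj_rel_subgroup[OF is_group subgroup invariant]
    by (auto simp: twisted_conj_rel_def)
next
  fix p assume "p \<in> Restr (twisted_conj_rel G phi) H"
  then show "p \<in> twisted_conj_rel (G\<lparr>carrier := H\<rparr>) phi"
    using twisted_conj_rel_subgroupI by auto
qed

lemma reidemeister_number_subgroup: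
  "reidemeister_number G phi = reidemeister_number (G\<lparr>carrier := H\<rparr>) phi"
proof -
  have "\<forall>x \<in> carrier G. \<exists>y \<in> H. (x, y) \<in> twisted_conj_rel G phi"
    using eventually_in twisted_conj_rel_funpow[OF group_hom] by blast
  then have "bij_betw (\<lambda>X. twisted_conj_rel G phi `` X)
      (reidemeister_classes (G\<lparr>carrier := H\<rparr>) phi) (reidemeister_classes G phi)"
    unfolding reidemeister_classes_def twisted_conj_rel_subgroup_eq_restrict
    using bij_betw_quotient_restrict[OF twisted_conj_rel_equiv[OF group_hom]]
      subgroup.subset[OF subgroup] by simp
  then show ?thesis
    unfolding reidemeister_number_def by (metis bij_betw_finite bij_betw_same_card)
qed

end

theorem mainTheorem7:
  fixes G :: "('a, 'b) monoid_scheme" and phi :: "'a \<Rightarrow> 'a" and H :: "'a set"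
  assumes "group G"
    and "phi \<in> hom G G"
    and "subgroup H G"
    and "phi ` H \<subseteq> H"
    and "\<forall>x \<in> carrier G. \<exists>n::nat. (phi ^^ n) x \<in> H"
  shows "reidemeister_number G phi = reidemeister_number (G\<lparr>carrier := H\<rparr>) phi \<and>
         ((\<forall>n\<ge>1. reidemeister_number G (phi ^^ n) \<noteq> \<infinity>) \<longrightarrow>
           reidemeister_zeta G phi = reidemeister_zeta (G\<lparr>carrier := H\<rparr>) phi)"
proof -
  have power: "reidemeister_number G (phi ^^ n) = reidemeister_number (G\<lparr>carrier := H\<rparr>) (phi ^^ n)"
    if "n \<ge> 1" for n
  proof (rule reidemeister_number_subgroup)
    show "group_hom G G (phi ^^ n)"
      using assms(1,2) by (intro group_hom_funpow) (simp add: group_hom_def group_hom_axioms_def)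
    show "(phi ^^ n) ` H \<subseteq> H" by (rule funpow_image_subset[OF assms(4)])
    show "\<forall>x \<in> carrier G. \<exists>m. ((phi ^^ n) ^^ m) x \<in> H"
      using assms(5) funpow_eventually_in_funpow[OF assms(4) _ that] by blast
  qed (fact assms(3))
  have "reidemeister_zeta G phi = reidemeister_zeta (G\<lparr>carrier := H\<rparr>) phi"
    unfolding reidemeister_zeta_def
    by (rule arg_cong[where f = "\<lambda>c. fps_exp 1 oo Abs_fps c"]) (auto simp: power)
  then show ?thesis using power[of 1] by simp
qed

end
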